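(* Let $N\ge1$, $k,m\in\mathbb{Z}$, and let $\varphi:\mathbb{H}\times\mathbb{C}\to\mathbb{C}$ transform like a Jacobi form of weight $k$ and index $m$ with respect to $\Gamma\ltimes\mathbb{Z}^2$ for a subgroup $\Gamma\subseteq\mathrm{SL}(2,\mathbb{Z})$. Define $\varphi_1(\tau,z)=\varphi(N\tau,z)$ when $\Gamma\in\{\Gamma^0(N),\Gamma^1(N)\}$, and $\varphi_2(\tau,z)=N^{-k/2}\tau^{-k}\mathbf{e}(-mz^2/(N\tau))\varphi(-\frac1{N\tau},\frac z{N\tau})$ when $\Gamma\in\{\Gamma_0(N),\Gamma_1(N)\}$. Then $\varphi_1|_{k,\frac mN}\gamma=\varphi_1$ for all $\gamma\in\Gamma_0(N)$ if $\Gamma=\Gamma^0(N)$ and for all $\gamma\in\Gamma_1(N)$ if $\Gamma=\Gamma^1(N)$; $\varphi_2|_{k,\frac mN}\gamma=\varphi_2$ for all $\gamma\in\Gamma$ (for $\Gamma\in\{\Gamma_0(N),\Gamma_1(N)\}$); and $\varphi_i|_{\frac mN}X=\varphi_i$ for all $X\in N\mathbb{Z}\times\mathbb{Z}$ ($i=1,2$, whenever defined).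
   Context: $\mathbf{e}(t)=e^{2\pi it}$. For $\gamma=\begin{pmatrix}a&b\\c&d\end{pmatrix}$ and real index $\mu_0$: $(\varphi|_{k,\mu_0}\gamma)(\tau,z)=(c\tau+d)^{-k}\mathbf{e}(-\mu_0\frac{cz^2}{c\tau+d})\varphi(\frac{a\tau+b}{c\tau+d},\frac z{c\tau+d})$; for $X=(\lambda,\mu)$: $(\varphi|_{\mu_0}X)(\tau,z)=\mathbf{e}(\mu_0(\lambda^2\tau+2\lambda z+\lambda\mu))\varphi(\tau,z+\lambda\tau+\mu)$. "Transforms like a Jacobi form of weight $k$, index $m$ w.r.t. $\Gamma\ltimes\mathbb{Z}^2$" means $\varphi|_{k,m}\gamma=\varphi$ for $\gamma\in\Gamma$ and $\varphi|_mX=\varphi$ for $X\in\mathbb{Z}^2$. $\Gamma_0(N)$: $c\equiv0\bmod N$; $\Gamma_1(N)$: $c\equiv0$, $a\equiv d\equiv1\bmod N$; $\Gamma^0(N)$: $b\equiv0\bmod N$; $\Gamma^1(N)$: $b\equiv0$, $a\equiv d\equiv1\bmod N$. *)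

theory Defs
  imports "HOL-Analysis.Analysis"
begin

definition ee :: "complex \<Rightarrow> complex" where
  "ee t = exp (2 * of_real pi * \<i> * t)"

text \<open>Matrices (a,b,c,d) in SL(2,Z) as integer quadruples.\<close>
type_synonym mat2 = "int \<times> int \<times> int \<times> int"
type_synonym jfun = "complex \<Rightarrow> complex \<Rightarrow> complex"

definition SL2Z :: "mat2 set" where
  "SL2Z = {(a,b,c,d). a*d - b*c = 1}"

definition Gamma_lo0 :: "int \<Rightarrow> mat2 set" where
  "Gamma_lo0 N = {(a,b,c,d). a*d - b*c = 1 \<and> N dvd c}"
definition Gamma_lo1 :: "int \<Rightarrow> mat2 set" where
  "Gamma_lo1 N = {(a,b,c,d). a*d - b*c = 1 \<and> N dvd c \<and> a mod N = 1 mod N \<and> d mod N = 1 mod N}"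
definition Gamma_up0 :: "int \<Rightarrow> mat2 set" where
  "Gamma_up0 N = {(a,b,c,d). a*d - b*c = 1 \<and> N dvd b}"
definition Gamma_up1 :: "int \<Rightarrow> mat2 set" where
  "Gamma_up1 N = {(a,b,c,d). a*d - b*c = 1 \<and> N dvd b \<and> a mod N = 1 mod N \<and> d mod N = 1 mod N}"

definition slash_mat :: "int \<Rightarrow> real \<Rightarrow> mat2 \<Rightarrow> jfun \<Rightarrow> jfun" where
  "slash_mat k mu0 g phi = (case g of (a,b,c,d) \<Rightarrow> (\<lambda>\<tau> z.
     (of_int c * \<tau> + of_int d) powi (-k)
     * ee (- of_real mu0 * of_int c * z^2 / (of_int c * \<tau> + of_int d))
     * phi ((of_int a * \<tau> + of_int b) / (of_int c * \<tau> + of_int d)) (z / (of_int c * \<tau> + of_int d))))"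

definition slash_heis :: "real \<Rightarrow> int \<times> int \<Rightarrow> jfun \<Rightarrow> jfun" where
  "slash_heis mu0 X phi = (case X of (l, m) \<Rightarrow> (\<lambda>\<tau> z.
     ee (of_real mu0 * (of_int l ^ 2 * \<tau> + 2 * of_int l * z + of_int l * of_int m))
     * phi \<tau> (z + of_int l * \<tau> + of_int m)))"

text \<open>Transforms like a Jacobi form of weight k, index m w.r.t. Gamma \<ltimes> Z^2
  (phi is defined on H x C, so the identities are required for Im tau > 0).\<close>
definition jacobi_like :: "int \<Rightarrow> real \<Rightarrow> mat2 set \<Rightarrow> jfun \<Rightarrow> bool" where
  "jacobi_like k m G phi \<longleftrightarrow>
     (\<forall>g\<in>G. \<forall>\<tau> z. Im \<tau> > 0 \<longrightarrow> slash_mat k m g phi \<tau> z = phi \<tau> z) \<and>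
     (\<forall>X::int\<times>int. \<forall>\<tau> z. Im \<tau> > 0 \<longrightarrow> slash_heis m X phi \<tau> z = phi \<tau> z)"

end

theory Submission
  imports Defs
begin

text \<open>
  Both transforms are slash operators by integral matrices of determinant \<open>N\<close> that normalise
  the relevant groups, which is why the index drops to \<open>m/N\<close>. The map \<open>\<tau> \<mapsto> N\<tau>\<close> behind
  \<open>\<phi>\<^sub>1\<close> comes from \<open>diag(N, 1)\<close>, which conjugates \<open>(a, b; Nc, d)\<close> into \<open>(a, Nb; c, d)\<close>,
  hence \<open>\<Gamma>\<^sub>0(N)\<close> into \<open>\<Gamma>\<^sup>0(N)\<close> and \<open>\<Gamma>\<^sub>1(N)\<close> into \<open>\<Gamma>\<^sup>1(N)\<close>, and turns \<open>(N\<lambda>, \<mu>)\<close>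
  into \<open>(\<lambda>, \<mu>)\<close>. The transform \<open>\<phi>\<^sub>2\<close> comes from the Fricke matrix \<open>W\<^sub>N = (0, -1; N, 0)\<close>,
  which conjugates \<open>(a, b; Nc, d)\<close> into \<open>(d, -c; -Nb, a)\<close>, so normalises \<open>\<Gamma>\<^sub>0(N)\<close> and
  \<open>\<Gamma>\<^sub>1(N)\<close>, and turns \<open>(N\<lambda>, \<mu>)\<close> into \<open>(-\<mu>, \<lambda>)\<close>.
\<close>

lemma ee_add: "ee (a + b) = ee a * ee b"
  by (simp add: ee_def distrib_left exp_add)

lemma of_int_mult_add_nonzero:
  fixes \<tau> :: complex
  assumes "Im \<tau> > 0" and "x \<noteq> 0 \<or> y \<noteq> 0"
  shows "of_int x * \<tau> + of_int y \<noteq> 0"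
proof
  assume zero: "of_int x * \<tau> + of_int y = 0"
  then have "Im (of_int x * \<tau> + of_int y) = 0" by simp
  with assms(1) have "x = 0" by simp
  with zero assms(2) show False by simp
qed

lemma Im_neg_inverse_pos:
  fixes w :: complex
  assumes "Im w > 0"
  shows "Im (- 1 / w) > 0"
  using assms by (auto simp: Im_divide' intro!: divide_pos_pos)

definition rescale :: "int \<Rightarrow> jfun \<Rightarrow> jfun" where
  "rescale N phi = (\<lambda>\<tau> z. phi (of_int N * \<tau>) z)"

lemma slash_mat_rescale:
  fixes N :: int and mu :: real
  assumes "N \<noteq> 0"
  shows "slash_mat k (mu / N) (a, b, N*c, d) (rescale N phi) \<tau> z
       = slash_mat k mu (a, N*b, c, d) phi (of_int N * \<tau>) z"
proof -
  have N0: "(of_int N :: complex) \<noteq> 0" using assms by simp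
  have denom: "of_int (N*c) * \<tau> + of_int d = of_int c * (of_int N * \<tau>) + (of_int d :: complex)"
    by simp
  have arg: "of_int N * ((of_int a * \<tau> + of_int b) / (of_int c * (of_int N * \<tau>) + of_int d))
     = (of_int a * (of_int N * \<tau>) + of_int (N*b)) / (of_int c * (of_int N * \<tau>) + (of_int d :: complex))"
    by (simp add: algebra_simps)
  have index: "- complex_of_real (mu / N) * of_int (N*c) = - of_real mu * of_int c"
    using N0 by simp
  show ?thesis
    unfolding slash_mat_def rescale_def prod.case by (simp only: denom arg index)
qed

lemma slash_heis_rescale:
  fixes N :: int and mu :: real
  assumes "N \<noteq> 0"
  shows "slash_heis (mu / N) (N*l, j) (rescale N phi) \<tau> z
       = slash_heis mu (l, j) phi (of_int N * \<tau>) z"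
proof -
  have N0: "(of_int N :: complex) \<noteq> 0" using assms by simp
  have exponent: "complex_of_real (mu / N) *
      ((of_int (N*l))\<^sup>2 * \<tau> + 2 * of_int (N*l) * z + of_int (N*l) * of_int j)
     = of_real mu * ((of_int l)\<^sup>2 * (of_int N * \<tau>) + 2 * of_int l * z + of_int l * of_int j)"
    using N0 by (simp add: field_simps power2_eq_square)
  have arg: "z + of_int (N*l) * \<tau> + of_int j = z + of_int l * (of_int N * \<tau>) + (of_int j :: complex)"
    by simp
  show ?thesis
    unfolding slash_heis_def rescale_def prod.case by (simp only: exponent arg)
qed

definition fricke :: "int \<Rightarrow> int \<Rightarrow> real \<Rightarrow> jfun \<Rightarrow> jfun" where
  "fricke N k mu phi = (\<lambda>\<tau> z. of_real (real_of_int N powr (- real_of_int k / 2)) * \<tau> powi (-k)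
     * ee (- of_real mu * z^2 / (of_int N * \<tau>))
     * phi (- 1 / (of_int N * \<tau>)) (z / (of_int N * \<tau>)))"

lemma fricke_cong:
  fixes N :: int
  assumes "N > 0" and "Im \<tau> > 0" and "\<And>w u. Im w > 0 \<Longrightarrow> psi w u = phi w u"
  shows "fricke N k mu psi \<tau> z = fricke N k mu phi \<tau> z"
proof -
  have "Im (- 1 / (of_int N * \<tau>)) > 0"
    using assms(1,2) by (intro Im_neg_inverse_pos) simp
  then show ?thesis unfolding fricke_def using assms(3) by simp
qed

lemma slash_mat_fricke:
  fixes N :: int and mu :: real and phi :: jfun
  assumes N: "N \<noteq> 0" and det: "a*d - b*(N*c) = 1" and \<tau>: "Im \<tau> > 0"
  shows "slash_mat k (mu / N) (a, b, N*c, d) (fricke N k mu phi) \<tau> z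
       = fricke N k mu (slash_mat k mu (d, -c, -(N*b), a) phi) \<tau> z"
proof -
  define A where "A = of_int a * \<tau> + of_int b"
  define J where "J = of_int (N*c) * \<tau> + of_int d"
  have "A \<noteq> 0" unfolding A_def using \<tau> det by (intro of_int_mult_add_nonzero) auto
  moreover have "J \<noteq> 0" unfolding J_def using \<tau> det by (intro of_int_mult_add_nonzero) auto
  ultimately have nz: "\<tau> \<noteq> 0" "A \<noteq> 0" "J \<noteq> 0" using \<tau> by auto
  define nk where "nk = complex_of_real (real_of_int N powr (- real_of_int k / 2))"
  let ?n = "of_int N :: complex"
  let ?common = "nk * A powi (-k) * ee (- of_real mu * of_int a * z^2 / (?n * A))
       * phi (- J / (?n * A)) (z / (?n * A))"
  have N0: "?n \<noteq> 0" using N by simp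
  have "slash_mat k (mu / N) (a, b, N*c, d) (fricke N k mu phi) \<tau> z = ?common"
  proof -
    let ?E1 = "ee (- of_real mu * of_int c * z^2 / J)"
    let ?E2 = "ee (- of_real mu * (z / J)^2 / (?n * (A / J)))"
    have cmu: "- complex_of_real (mu / of_int N) * of_int (N*c) = - of_real mu * of_int c"
      using N0 by simp
    have pw: "J powi (-k) * (A / J) powi (-k) = A powi (-k)"
      using nz by (simp flip: power_int_mult_distrib)
    have key: "?n * of_int c * A + 1 = of_int a * J"
      using arg_cong[OF det, of "of_int :: int \<Rightarrow> complex"] unfolding A_def J_def by (simp add: algebra_simps)
    have "- of_real mu * of_int c * z^2 / J + - of_real mu * (z / J)^2 / (?n * (A / J))
        = - of_real mu * z^2 * (?n * of_int c * A + 1) / (?n * J * A)"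
      using nz N0 by (simp add: field_simps power2_eq_square)
    also have "\<dots> = - of_real mu * of_int a * z^2 / (?n * A)"
      using nz unfolding key by (simp add: field_simps)
    finally have ex: "?E1 * ?E2 = ee (- of_real mu * of_int a * z^2 / (?n * A))"
      by (simp flip: ee_add)
    have args: "- 1 / (?n * (A / J)) = - J / (?n * A)" "(z / J) / (?n * (A / J)) = z / (?n * A)"
      using nz by simp_all
    have "slash_mat k (mu / N) (a, b, N*c, d) (fricke N k mu phi) \<tau> z
       = J powi (-k) * ?E1 * (nk * (A / J) powi (-k) * ?E2
          * phi (- 1 / (?n * (A / J))) ((z / J) / (?n * (A / J))))"
      unfolding slash_mat_def fricke_def prod.case nk_def[symmetric] by (simp only: A_def[symmetric] J_def[symmetric] cmu)
    also have "\<dots> = nk * (J powi (-k) * (A / J) powi (-k)) * (?E1 * ?E2)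
          * phi (- 1 / (?n * (A / J))) ((z / J) / (?n * (A / J)))"
      by (simp only: mult_ac)
    finally show ?thesis by (simp only: pw ex args)
  qed
  moreover have "fricke N k mu (slash_mat k mu (d, -c, -(N*b), a) phi) \<tau> z = ?common"
  proof -
    let ?w = "- 1 / (?n * \<tau>)" and ?u = "z / (?n * \<tau>)"
    let ?H = "of_int (- (N * b)) * ?w + of_int a"
    let ?E1 = "ee (- of_real mu * z^2 / (?n * \<tau>))"
    let ?E2 = "ee (- of_real mu * of_int (- (N * b)) * ?u^2 / ?H)"
    have Ab: "A - of_int b = of_int a * \<tau>" unfolding A_def by simp
    have H: "?H = A / \<tau>"
      unfolding A_def using nz N0 by (simp add: field_simps)
    have pw: "\<tau> powi (-k) * ?H powi (-k) = A powi (-k)"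
      unfolding H using nz by (simp flip: power_int_mult_distrib)
    have "- of_real mu * z^2 / (?n * \<tau>) + - of_real mu * of_int (- (N * b)) * ?u^2 / ?H
        = - of_real mu * z^2 * (A - of_int b) / (?n * \<tau> * A)"
      unfolding H using nz N0 by (simp add: field_simps power2_eq_square)
    also have "\<dots> = - of_real mu * of_int a * z^2 / (?n * A)"
      unfolding Ab using nz N0 by (simp add: field_simps)
    finally have ex: "?E1 * ?E2 = ee (- of_real mu * of_int a * z^2 / (?n * A))"
      by (simp flip: ee_add)
    have args: "(of_int d * ?w + of_int (- c)) / ?H = - J / (?n * A)" "?u / ?H = z / (?n * A)"
      unfolding H J_def using nz N0 by (simp_all add: field_simps)
    have "fricke N k mu (slash_mat k mu (d, -c, -(N*b), a) phi) \<tau> z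
       = nk * \<tau> powi (-k) * ?E1 * (?H powi (-k) * ?E2 * phi ((of_int d * ?w + of_int (- c)) / ?H) (?u / ?H))"
      unfolding slash_mat_def fricke_def prod.case nk_def[symmetric] by (simp only: of_real_of_int_eq)
    also have "\<dots> = nk * (\<tau> powi (-k) * ?H powi (-k)) * (?E1 * ?E2) * phi ((of_int d * ?w + of_int (- c)) / ?H) (?u / ?H)"
      by (simp only: mult_ac)
    finally show ?thesis by (simp only: pw ex args)
  qed
  ultimately show ?thesis by simp
qed

lemma slash_heis_fricke:
  fixes N :: int and mu :: real and phi :: jfun
  assumes N: "N \<noteq> 0" and \<tau>: "\<tau> \<noteq> 0"
  shows "slash_heis (mu / N) (N*l, j) (fricke N k mu phi) \<tau> z
       = fricke N k mu (slash_heis mu (-j, l) phi) \<tau> z"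
proof -
  define nk where "nk = complex_of_real (real_of_int N powr (- real_of_int k / 2))"
  let ?n = "of_int N :: complex"
  let ?w = "- 1 / (?n * \<tau>)"
  let ?common = "nk * \<tau> powi (-k) * ee (- of_real mu * ((z + of_int j)^2 / (?n * \<tau>) + of_int l * of_int j))
       * phi ?w ((z + of_int j) / (?n * \<tau>) + of_int l)"
  have N0: "?n \<noteq> 0" using N by simp
  have "slash_heis (mu / N) (N*l, j) (fricke N k mu phi) \<tau> z = ?common"
  proof -
    let ?z' = "z + of_int (N*l) * \<tau> + of_int j"
    let ?E1 = "ee (of_real (mu / N) * ((of_int (N*l))^2 * \<tau> + 2 * of_int (N*l) * z + of_int (N*l) * of_int j))"
    let ?E2 = "ee (- of_real mu * ?z'^2 / (?n * \<tau>))"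
    have "of_real (mu / N) * ((of_int (N*l))^2 * \<tau> + 2 * of_int (N*l) * z + of_int (N*l) * of_int j)
        + - of_real mu * ?z'^2 / (?n * \<tau>)
        = - of_real mu * ((z + of_int j)^2 / (?n * \<tau>) + of_int l * of_int j)"
      using N0 \<tau> by (simp add: field_simps power2_eq_square)
    then have "?E1 * ?E2 = ee (- of_real mu * ((z + of_int j)^2 / (?n * \<tau>) + of_int l * of_int j))"
      by (simp only: ee_add[symmetric])
    moreover have "?z' / (?n * \<tau>) = (z + of_int j) / (?n * \<tau>) + of_int l"
      using N0 \<tau> by (simp add: field_simps)
    moreover have "slash_heis (mu / N) (N*l, j) (fricke N k mu phi) \<tau> z
       = nk * \<tau> powi (-k) * (?E1 * ?E2) * phi ?w (?z' / (?n * \<tau>))"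
      unfolding slash_heis_def fricke_def prod.case nk_def[symmetric] by (simp only: mult_ac)
    ultimately show ?thesis by (simp only:)
  qed
  moreover have "fricke N k mu (slash_heis mu (-j, l) phi) \<tau> z = ?common"
  proof -
    let ?u = "z / (?n * \<tau>)"
    let ?E1 = "ee (- of_real mu * z^2 / (?n * \<tau>))"
    let ?E2 = "ee (of_real mu * ((of_int (-j))^2 * ?w + 2 * of_int (-j) * ?u + of_int (-j) * of_int l))"
    have "- of_real mu * z^2 / (?n * \<tau>)
        + of_real mu * ((of_int (-j))^2 * ?w + 2 * of_int (-j) * ?u + of_int (-j) * of_int l)
        = - of_real mu * ((z + of_int j)^2 / (?n * \<tau>) + of_int l * of_int j)"
      using N0 \<tau> by (simp add: field_simps power2_eq_square)
    then have "?E1 * ?E2 = ee (- of_real mu * ((z + of_int j)^2 / (?n * \<tau>) + of_int l * of_int j))"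
      by (simp only: ee_add[symmetric])
    moreover have "?u + of_int (-j) * ?w + of_int l = (z + of_int j) / (?n * \<tau>) + of_int l"
      using N0 \<tau> by (simp add: field_simps)
    moreover have "fricke N k mu (slash_heis mu (-j, l) phi) \<tau> z
       = nk * \<tau> powi (-k) * (?E1 * ?E2) * phi ?w (?u + of_int (-j) * ?w + of_int l)"
      unfolding slash_heis_def fricke_def prod.case nk_def[symmetric] by (simp only: mult_ac)
    ultimately show ?thesis by (simp only:)
  qed
  ultimately show ?thesis by simp
qed

lemma rescale_invariant:
  fixes N :: int and mu :: real
  assumes N: "N > 0" and phi: "jacobi_like k mu G phi"
    and conj: "\<And>g. g \<in> G' \<Longrightarrow> \<exists>a b c d. g = (a, b, N*c, d) \<and> (a, N*b, c, d) \<in> G"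
  shows "(\<forall>g\<in>G'. \<forall>\<tau> z. Im \<tau> > 0 \<longrightarrow> slash_mat k (mu / N) g (rescale N phi) \<tau> z = rescale N phi \<tau> z)
       \<and> (\<forall>l j. \<forall>\<tau> z. Im \<tau> > 0 \<longrightarrow> slash_heis (mu / N) (N*l, j) (rescale N phi) \<tau> z = rescale N phi \<tau> z)"
proof (intro conjI ballI allI impI)
  fix g \<tau> z assume "g \<in> G'" "Im \<tau> > 0"
  then have N\<tau>: "Im (of_int N * \<tau>) > 0" using N by simp
  obtain a b c d where g: "g = (a, b, N*c, d)" and "(a, N*b, c, d) \<in> G"
    using conj \<open>g \<in> G'\<close> by blast
  have "slash_mat k (mu / N) g (rescale N phi) \<tau> z = slash_mat k mu (a, N*b, c, d) phi (of_int N * \<tau>) z"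
    unfolding g using N by (simp add: slash_mat_rescale)
  also have "\<dots> = rescale N phi \<tau> z"
    using phi \<open>(a, N*b, c, d) \<in> G\<close> N\<tau> unfolding jacobi_like_def rescale_def by blast
  finally show "slash_mat k (mu / N) g (rescale N phi) \<tau> z = rescale N phi \<tau> z" .
next
  fix l j \<tau> z assume "Im \<tau> > 0"
  then have N\<tau>: "Im (of_int N * \<tau>) > 0" using N by simp
  have "slash_heis (mu / N) (N*l, j) (rescale N phi) \<tau> z = slash_heis mu (l, j) phi (of_int N * \<tau>) z"
    using N by (simp add: slash_heis_rescale)
  also have "\<dots> = rescale N phi \<tau> z"
    using phi N\<tau> unfolding jacobi_like_def rescale_def by blast
  finally show "slash_heis (mu / N) (N*l, j) (rescale N phi) \<tau> z = rescale N phi \<tau> z" .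
qed

lemma fricke_invariant:
  fixes N :: int and mu :: real
  assumes N: "N > 0" and phi: "jacobi_like k mu G phi"
    and conj: "\<And>g. g \<in> G \<Longrightarrow>
      \<exists>a b c d. g = (a, b, N*c, d) \<and> a*d - b*(N*c) = 1 \<and> (d, -c, -(N*b), a) \<in> G"
  shows "(\<forall>g\<in>G. \<forall>\<tau> z. Im \<tau> > 0 \<longrightarrow> slash_mat k (mu / N) g (fricke N k mu phi) \<tau> z = fricke N k mu phi \<tau> z)
       \<and> (\<forall>l j. \<forall>\<tau> z. Im \<tau> > 0 \<longrightarrow> slash_heis (mu / N) (N*l, j) (fricke N k mu phi) \<tau> z = fricke N k mu phi \<tau> z)"
proof (intro conjI ballI allI impI)
  fix g \<tau> z assume "g \<in> G" and \<tau>: "Im \<tau> > 0"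
  then obtain a b c d where g: "g = (a, b, N*c, d)" and det: "a*d - b*(N*c) = 1"
    and "(d, -c, -(N*b), a) \<in> G"
    using conj by blast
  have "slash_mat k (mu / N) g (fricke N k mu phi) \<tau> z
      = fricke N k mu (slash_mat k mu (d, -c, -(N*b), a) phi) \<tau> z"
    unfolding g using N det \<tau> by (simp add: slash_mat_fricke)
  also have "\<dots> = fricke N k mu phi \<tau> z"
    using phi \<open>(d, -c, -(N*b), a) \<in> G\<close> unfolding jacobi_like_def by (intro fricke_cong[OF N \<tau>]) blast
  finally show "slash_mat k (mu / N) g (fricke N k mu phi) \<tau> z = fricke N k mu phi \<tau> z" .
next
  fix l j \<tau> z assume \<tau>: "Im \<tau> > 0"
  have "slash_heis (mu / N) (N*l, j) (fricke N k mu phi) \<tau> z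
      = fricke N k mu (slash_heis mu (-j, l) phi) \<tau> z"
    using N \<tau> by (intro slash_heis_fricke) auto
  also have "\<dots> = fricke N k mu phi \<tau> z"
    using phi unfolding jacobi_like_def by (intro fricke_cong[OF N \<tau>]) blast
  finally show "slash_heis (mu / N) (N*l, j) (fricke N k mu phi) \<tau> z = fricke N k mu phi \<tau> z" .
qed

lemma Gamma_lo0_conj_Gamma_up0:
  assumes "g \<in> Gamma_lo0 N"
  shows "\<exists>a b c d. g = (a, b, N*c, d) \<and> (a, N*b, c, d) \<in> Gamma_up0 N"
proof -
  obtain a b c d where "g = (a, b, N*c, d)" "a*d - b*(N*c) = 1"
    using assms unfolding Gamma_lo0_def by (auto elim!: dvdE)
  then show ?thesis unfolding Gamma_up0_def by (auto simp: mult.left_commute)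
qed

lemma Gamma_lo1_conj_Gamma_up1:
  assumes "g \<in> Gamma_lo1 N"
  shows "\<exists>a b c d. g = (a, b, N*c, d) \<and> (a, N*b, c, d) \<in> Gamma_up1 N"
proof -
  obtain a b c d where "g = (a, b, N*c, d)" "a*d - b*(N*c) = 1"
    "a mod N = 1 mod N" "d mod N = 1 mod N"
    using assms unfolding Gamma_lo1_def by (auto elim!: dvdE)
  then show ?thesis unfolding Gamma_up1_def by (auto simp: mult.left_commute)
qed

lemma Gamma_lo0_Fricke_conj:
  assumes "g \<in> Gamma_lo0 N"
  shows "\<exists>a b c d. g = (a, b, N*c, d) \<and> a*d - b*(N*c) = 1 \<and> (d, -c, -(N*b), a) \<in> Gamma_lo0 N"
proof -
  obtain a b c d where "g = (a, b, N*c, d)" "a*d - b*(N*c) = 1"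
    using assms unfolding Gamma_lo0_def by (auto elim!: dvdE)
  then show ?thesis unfolding Gamma_lo0_def by (auto simp: mult.commute mult.left_commute)
qed

lemma Gamma_lo1_Fricke_conj:
  assumes "g \<in> Gamma_lo1 N"
  shows "\<exists>a b c d. g = (a, b, N*c, d) \<and> a*d - b*(N*c) = 1 \<and> (d, -c, -(N*b), a) \<in> Gamma_lo1 N"
proof -
  obtain a b c d where "g = (a, b, N*c, d)" "a*d - b*(N*c) = 1"
    "a mod N = 1 mod N" "d mod N = 1 mod N"
    using assms unfolding Gamma_lo1_def by (auto elim!: dvdE)
  then show ?thesis unfolding Gamma_lo1_def by (auto simp: mult.commute mult.left_commute)
qed

theorem proposition4p1:
  fixes N k m :: int and phi :: "complex \<Rightarrow> complex \<Rightarrow> complex"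
  assumes "N \<ge> 1"
  defines "phi1 \<equiv> (\<lambda>\<tau> z. phi (of_int N * \<tau>) z)"
  defines "phi2 \<equiv> (\<lambda>\<tau> z. of_real (real_of_int N powr (- real_of_int k / 2)) * \<tau> powi (-k)
             * ee (- of_int m * z^2 / (of_int N * \<tau>))
             * phi (- 1 / (of_int N * \<tau>)) (z / (of_int N * \<tau>)))"
  shows
   "(jacobi_like k (of_int m) (Gamma_up0 N) phi \<longrightarrow>
       (\<forall>g\<in>Gamma_lo0 N. \<forall>\<tau> z. Im \<tau> > 0 \<longrightarrow> slash_mat k (m / N) g phi1 \<tau> z = phi1 \<tau> z) \<and>
       (\<forall>l j. \<forall>\<tau> z. Im \<tau> > 0 \<longrightarrow> slash_heis (m / N) (N * l, j) phi1 \<tau> z = phi1 \<tau> z)) \<and>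
    (jacobi_like k (of_int m) (Gamma_up1 N) phi \<longrightarrow>
       (\<forall>g\<in>Gamma_lo1 N. \<forall>\<tau> z. Im \<tau> > 0 \<longrightarrow> slash_mat k (m / N) g phi1 \<tau> z = phi1 \<tau> z) \<and>
       (\<forall>l j. \<forall>\<tau> z. Im \<tau> > 0 \<longrightarrow> slash_heis (m / N) (N * l, j) phi1 \<tau> z = phi1 \<tau> z)) \<and>
    (jacobi_like k (of_int m) (Gamma_lo0 N) phi \<longrightarrow>
       (\<forall>g\<in>Gamma_lo0 N. \<forall>\<tau> z. Im \<tau> > 0 \<longrightarrow> slash_mat k (m / N) g phi2 \<tau> z = phi2 \<tau> z) \<and>
       (\<forall>l j. \<forall>\<tau> z. Im \<tau> > 0 \<longrightarrow> slash_heis (m / N) (N * l, j) phi2 \<tau> z = phi2 \<tau> z)) \<and>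
    (jacobi_like k (of_int m) (Gamma_lo1 N) phi \<longrightarrow>
       (\<forall>g\<in>Gamma_lo1 N. \<forall>\<tau> z. Im \<tau> > 0 \<longrightarrow> slash_mat k (m / N) g phi2 \<tau> z = phi2 \<tau> z) \<and>
       (\<forall>l j. \<forall>\<tau> z. Im \<tau> > 0 \<longrightarrow> slash_heis (m / N) (N * l, j) phi2 \<tau> z = phi2 \<tau> z))"
proof -
  have N: "N > 0" using assms by simp
  have phi1: "phi1 = rescale N phi" unfolding phi1_def rescale_def ..
  have phi2: "phi2 = fricke N k (of_int m) phi" unfolding phi2_def fricke_def by simp
  show ?thesis
    unfolding phi1 phi2
    by (intro conjI[of "_ \<longrightarrow> _"] impI;
        rule rescale_invariant[OF N _ Gamma_lo0_conj_Gamma_up0]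
          rescale_invariant[OF N _ Gamma_lo1_conj_Gamma_up1]
          fricke_invariant[OF N _ Gamma_lo0_Fricke_conj]
          fricke_invariant[OF N _ Gamma_lo1_Fricke_conj],
        assumption)
qed

end
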